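(* Let $(l_n)_{n\ge 1}$, $(r_n)_{n\ge 1}$ be real numbers with $l_n,r_n>0$ and $l_n+r_n=1$, let $k\ge 1$ be an integer, and let $(X_m)_{m\ge 0}$ be the birth-death chain with these probabilities and $X_0=k$; let $T_\Delta$ be its first hitting time of $0$, and assume $P(T_\Delta<\infty)=1$. Let $t_0=1$, $t_n=\frac{l_1\cdots l_n}{r_1\cdots r_n}$ for $n\ge1$, and $x_n=\sum_{i=0}^{n-1}t_i$. For a random time $T$ and $n\ge 1$, let $G_T^n$ denote the number of times $m\in\{0,\dots,T-1\}$ with $X_m=n$. Let $(T_m)_{m\ge1}$ be a non-decreasing sequence of stopping times with $E[T_m]<\infty$ and $T_m\to T_\Delta$ almost surely. Then for every $n\ge 1$, $$E[G_{T_\Delta}^n]=\lim_{m\to\infty}E[G_{T_m}^n]=\frac{\min(x_n,x_k)}{t_{n-1}l_n}.$$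
   Context: The birth-death chain: $(X_m)$ is a Markov chain on the nonnegative integers which from a state $n\ge 1$ moves to $n+1$ with probability $r_n$ and to $n-1$ with probability $l_n$, and for which $0$ is absorbing. Stopping times are with respect to the natural filtration of $(X_m)$. *)

theory Defs
  imports "HOL-Probability.Probability"
begin

definition bd_trans :: "(nat \<Rightarrow> real) \<Rightarrow> (nat \<Rightarrow> real) \<Rightarrow> nat \<Rightarrow> nat \<Rightarrow> real" where
  "bd_trans l r i j =
     (if i = 0 then (if j = 0 then 1 else 0)
      else if j = Suc i then r i
      else if Suc j = i then l i
      else 0)"

definition is_bd_chain ::
  "'a measure \<Rightarrow> (nat \<Rightarrow> real) \<Rightarrow> (nat \<Rightarrow> real) \<Rightarrow> nat \<Rightarrow> (nat \<Rightarrow> 'a \<Rightarrow> nat) \<Rightarrow> bool" where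
  "is_bd_chain M l r k X \<longleftrightarrow>
     (\<forall>m. X m \<in> measurable M (count_space UNIV)) \<and>
     measure M {\<omega> \<in> space M. X 0 \<omega> = k} = 1 \<and>
     (\<forall>m (s :: nat \<Rightarrow> nat) j.
        measure M {\<omega> \<in> space M. (\<forall>i\<le>m. X i \<omega> = s i) \<and> X (Suc m) \<omega> = j}
        = measure M {\<omega> \<in> space M. \<forall>i\<le>m. X i \<omega> = s i} * bd_trans l r (s m) j)"

definition nat_stopping_time :: "'a measure \<Rightarrow> (nat \<Rightarrow> 'a \<Rightarrow> nat) \<Rightarrow> ('a \<Rightarrow> enat) \<Rightarrow> bool" where
  "nat_stopping_time M X T \<longleftrightarrow>
     (\<forall>m::nat. {\<omega> \<in> space M. T \<omega> = enat m} \<in>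
        sigma_sets (space M) {{\<omega> \<in> space M. X i \<omega> = s} | i s. i \<le> m})"

definition hit0 :: "(nat \<Rightarrow> 'a \<Rightarrow> nat) \<Rightarrow> 'a \<Rightarrow> enat" where
  "hit0 X \<omega> = (if \<exists>m. X m \<omega> = 0 then enat (LEAST m. X m \<omega> = 0) else \<infinity>)"

definition visits :: "(nat \<Rightarrow> 'a \<Rightarrow> nat) \<Rightarrow> ('a \<Rightarrow> enat) \<Rightarrow> nat \<Rightarrow> 'a \<Rightarrow> ennreal" where
  "visits X T n \<omega> = (\<Sum>m. if enat m < T \<omega> \<and> X m \<omega> = n then 1 else 0)"

definition bd_t :: "(nat \<Rightarrow> real) \<Rightarrow> (nat \<Rightarrow> real) \<Rightarrow> nat \<Rightarrow> real" where
  "bd_t l r n = (\<Prod>i\<in>{1..n}. l i) / (\<Prod>i\<in>{1..n}. r i)"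

definition bd_x :: "(nat \<Rightarrow> real) \<Rightarrow> (nat \<Rightarrow> real) \<Rightarrow> nat \<Rightarrow> real" where
  "bd_x l r n = (\<Sum>i<n. bd_t l r i)"

end

theory Submission
  imports Defs
begin

text \<open>
  Let \<open>occ m j\<close> be the probability that the chain has not hit \<open>0\<close> by time \<open>m\<close> and sits at \<open>j\<close>,
  and \<open>tail m n\<close> the probability that it has not hit \<open>0\<close> by time \<open>m\<close> and sits at or above \<open>n\<close>.
  From \<open>m\<close> to \<open>m+1\<close> the mass at or above \<open>n\<close> changes only by the flux across the edge
  \<open>{n-1, n}\<close>: \<open>tail (m+1) n = tail m n - l\<^sub>n occ m n + r\<^sub>n\<^sub>-\<^sub>1 occ m (n-1)\<close>. Summing over \<open>m\<close>,
  with \<open>tail 0 n = [n \<le> k]\<close> and \<open>tail m n \<rightarrow> 0\<close> (absorption is almost sure), the expected numbers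
  of visits \<open>g n = \<Sum>\<^sub>m occ m n\<close> satisfy \<open>l\<^sub>n g n = [n \<le> k] + r\<^sub>n\<^sub>-\<^sub>1 g (n-1)\<close>, a recursion solved
  by the closed form. Along almost every path the increasing \<open>T\<^sub>m\<close> eventually equal the finite
  \<open>T\<^sub>\<Delta>\<close>, so monotone convergence gives the limit.
\<close>

lemma tendsto_enat_eventually_eq:
  assumes "f \<longlonglongrightarrow> enat n"
  shows "eventually (\<lambda>m. f m = enat n) sequentially"
  using topological_tendstoD[OF assms open_enat] by simp

lemma visits_mono: "(\<And>\<omega>. T \<omega> \<le> T' \<omega>) \<Longrightarrow> visits X T n \<omega> \<le> visits X T' n \<omega>"
  unfolding visits_def by (intro suminf_le summableI) (auto intro: less_le_trans)

lemma enat_less_hit0_iff: "enat m < hit0 X \<omega> \<longleftrightarrow> (\<forall>i\<le>m. X i \<omega> \<noteq> 0)"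
proof (cases "\<exists>j. X j \<omega> = 0")
  case True
  then have "X (LEAST j. X j \<omega> = 0) \<omega> = 0" by (rule LeastI_ex)
  then have "m < (LEAST j. X j \<omega> = 0) \<longleftrightarrow> (\<forall>i\<le>m. X i \<omega> \<noteq> 0)"
    by (meson leI le_less_trans not_less_Least)
  with True show ?thesis unfolding hit0_def by simp
next
  case False
  then have "hit0 X \<omega> = \<infinity>" unfolding hit0_def by simp
  with False show ?thesis by simp
qed

lemma nn_integral_visits:
  assumes "\<And>m. {\<omega>\<in>space M. enat m < T \<omega> \<and> X m \<omega> = n} \<in> sets M"
  shows "(\<integral>\<^sup>+ \<omega>. visits X T n \<omega> \<partial>M) = (\<Sum>m. emeasure M {\<omega>\<in>space M. enat m < T \<omega> \<and> X m \<omega> = n})"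
proof -
  have "(\<integral>\<^sup>+ \<omega>. visits X T n \<omega> \<partial>M)
      = (\<integral>\<^sup>+ \<omega>. (\<Sum>m. indicator {\<omega>\<in>space M. enat m < T \<omega> \<and> X m \<omega> = n} \<omega>) \<partial>M)"
    unfolding visits_def by (intro nn_integral_cong suminf_cong) (auto simp: indicator_def)
  also have "\<dots> = (\<Sum>m. emeasure M {\<omega>\<in>space M. enat m < T \<omega> \<and> X m \<omega> = n})"
    using assms by (subst nn_integral_suminf) auto
  finally show ?thesis .
qed

lemma nat_stopping_time_less_sets:
  assumes X: "\<And>i. X i \<in> measurable M (count_space UNIV)"
    and T: "nat_stopping_time M X T"
  shows "{\<omega>\<in>space M. enat j < T \<omega>} \<in> sets M"
proof -
  have T_eq: "{\<omega>\<in>space M. T \<omega> = enat i} \<in> sets M" for i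
  proof -
    have "{{\<omega> \<in> space M. X i' \<omega> = s} | i' s. i' \<le> i} \<subseteq> sets M"
      using X by auto
    then have "sigma_sets (space M) {{\<omega> \<in> space M. X i' \<omega> = s} | i' s. i' \<le> i} \<subseteq> sets M"
      by (rule sets.sigma_sets_subset)
    then show ?thesis using T unfolding nat_stopping_time_def by blast
  qed
  have "{\<omega>\<in>space M. enat j < T \<omega>} = space M - (\<Union>i\<in>{..j}. {\<omega>\<in>space M. T \<omega> = enat i})"
  proof (intro set_eqI iffI)
    fix \<omega> assume "\<omega> \<in> space M - (\<Union>i\<in>{..j}. {\<omega>\<in>space M. T \<omega> = enat i})"
    then show "\<omega> \<in> {\<omega>\<in>space M. enat j < T \<omega>}" by (cases "T \<omega>") (auto simp: not_less)
  qed auto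
  also have "\<dots> \<in> sets M" using T_eq by auto
  finally show ?thesis .
qed

lemma nn_integral_visits_stopping_tendsto:
  assumes X: "\<And>i. X i \<in> measurable M (count_space UNIV)"
    and T: "\<And>m. nat_stopping_time M X (T m)"
    and mono: "\<And>m \<omega>. T m \<omega> \<le> T (Suc m) \<omega>"
    and finite: "AE \<omega> in M. \<tau> \<omega> < \<infinity>"
    and conv: "AE \<omega> in M. (\<lambda>m. T m \<omega>) \<longlonglongrightarrow> \<tau> \<omega>"
  shows "(\<lambda>m. \<integral>\<^sup>+ \<omega>. visits X (T m) n \<omega> \<partial>M) \<longlonglongrightarrow> (\<integral>\<^sup>+ \<omega>. visits X \<tau> n \<omega> \<partial>M)"
proof -
  define f where "f m = visits X (T m) n" for m
  have f_measurable: "f m \<in> borel_measurable M" for m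
  proof -
    have [measurable]: "X j \<in> measurable M (count_space UNIV)"
      "{\<omega>\<in>space M. enat j < T m \<omega>} \<in> sets M" for j
      using X nat_stopping_time_less_sets[OF X T] by auto
    have "(\<lambda>\<omega>. \<Sum>j. indicator {\<omega>\<in>space M. enat j < T m \<omega> \<and> X j \<omega> = n} \<omega> :: ennreal)
        \<in> borel_measurable M"
      by measurable
    then show ?thesis
      unfolding f_def visits_def
      by (rule measurable_cong[THEN iffD1, rotated]) (auto intro!: suminf_cong simp: indicator_def)
  qed
  have inc: "incseq f"
    by (rule incseq_SucI) (auto simp: le_fun_def f_def intro!: visits_mono mono)
  have "(\<lambda>m. integral\<^sup>N M (f m)) \<longlonglongrightarrow> (SUP m. integral\<^sup>N M (f m))"
    using inc by (intro LIMSEQ_SUP) (auto simp: incseq_def le_fun_def intro!: nn_integral_mono)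
  also have "(SUP m. integral\<^sup>N M (f m)) = (\<integral>\<^sup>+ \<omega>. (SUP m. f m \<omega>) \<partial>M)"
    by (rule nn_integral_monotone_convergence_SUP[OF inc f_measurable, symmetric])
  also have "\<dots> = (\<integral>\<^sup>+ \<omega>. visits X \<tau> n \<omega> \<partial>M)"
  proof (rule nn_integral_cong_AE)
    show "AE \<omega> in M. (SUP m. f m \<omega>) = visits X \<tau> n \<omega>"
      using finite conv
    proof eventually_elim
      case (elim \<omega>)
      then obtain H where H: "\<tau> \<omega> = enat H" by (cases "\<tau> \<omega>") auto
      have "eventually (\<lambda>m. T m \<omega> = \<tau> \<omega>) sequentially"
        using elim(2) unfolding H by (rule tendsto_enat_eventually_eq)
      then have "eventually (\<lambda>m. f m \<omega> = visits X \<tau> n \<omega>) sequentially"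
        by eventually_elim (simp add: f_def visits_def)
      then have "(\<lambda>m. f m \<omega>) \<longlonglongrightarrow> visits X \<tau> n \<omega>" by (rule tendsto_eventually)
      moreover have "(\<lambda>m. f m \<omega>) \<longlonglongrightarrow> (SUP m. f m \<omega>)"
        using inc by (intro LIMSEQ_SUP) (auto simp: incseq_def le_fun_def)
      ultimately show ?case using LIMSEQ_unique by blast
    qed
  qed
  finally show ?thesis unfolding f_def .
qed

lemma bd_t_0[simp]: "bd_t l r 0 = 1"
  unfolding bd_t_def by simp

lemma bd_t_Suc: "bd_t l r (Suc n) = bd_t l r n * l (Suc n) / r (Suc n)"
  unfolding bd_t_def by (simp add: prod.nat_ivl_Suc')

lemma bd_x_0[simp]: "bd_x l r 0 = 0"
  unfolding bd_x_def by simp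

lemma bd_x_Suc: "bd_x l r (Suc n) = bd_x l r n + bd_t l r n"
  unfolding bd_x_def by simp

lemma bd_trans_nonzero_imp_neighbour:
  "i \<noteq> 0 \<Longrightarrow> bd_trans l r i j \<noteq> 0 \<Longrightarrow> j = i - 1 \<or> j = Suc i"
  unfolding bd_trans_def by (auto split: if_splits)

locale bd_chain = prob_space M for M :: "'a measure" +
  fixes l r :: "nat \<Rightarrow> real" and k :: nat and X :: "nat \<Rightarrow> 'a \<Rightarrow> nat"
  assumes l_pos: "\<And>n. n \<ge> 1 \<Longrightarrow> l n > 0"
    and r_pos: "\<And>n. n \<ge> 1 \<Longrightarrow> r n > 0"
    and l_plus_r: "\<And>n. n \<ge> 1 \<Longrightarrow> l n + r n = 1"
    and start_pos: "k \<ge> 1"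
    and chain: "is_bd_chain M l r k X"
begin

lemma X_measurable[measurable]: "X m \<in> measurable M (count_space UNIV)"
  using chain unfolding is_bd_chain_def by auto

lemma bd_trans_nonneg: "bd_trans l r i j \<ge> 0"
  using l_pos[of i] r_pos[of i] unfolding bd_trans_def by auto

text \<open>Paths are lists, so that they range over a countable type: the Markov property for
  single paths then extends to events determined by the path by countable additivity.\<close>

definition path :: "nat \<Rightarrow> 'a \<Rightarrow> nat list" where
  "path m \<omega> = map (\<lambda>i. X i \<omega>) [0..<Suc m]"

lemma length_path[simp]: "length (path m \<omega>) = Suc m"
  unfolding path_def by simp

lemma nth_path[simp]: "i \<le> m \<Longrightarrow> path m \<omega> ! i = X i \<omega>"
  unfolding path_def by (simp del: upt_Suc)

lemma path_eq_iff: "length s = Suc m \<Longrightarrow> path m \<omega> = s \<longleftrightarrow> (\<forall>i\<le>m. X i \<omega> = s ! i)"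
  by (auto simp: list_eq_iff_nth_eq less_Suc_eq_le)

lemma sets_path_eq: "{\<omega>\<in>space M. path m \<omega> = s} \<in> sets M"
proof (cases "length s = Suc m")
  case True
  then have "{\<omega>\<in>space M. path m \<omega> = s} = {\<omega>\<in>space M. \<forall>i\<le>m. X i \<omega> = s ! i}"
    using path_eq_iff by blast
  then show ?thesis by simp
next
  case False
  then have "path m \<omega> \<noteq> s" for \<omega> by (metis length_path)
  then have "{\<omega>\<in>space M. path m \<omega> = s} = {}" by blast
  then show ?thesis by (metis sets.empty_sets)
qed

lemma measure_path_step:
  "prob {\<omega>\<in>space M. Q (path m \<omega>) \<and> X m \<omega> = i \<and> X (Suc m) \<omega> = j}
     = prob {\<omega>\<in>space M. Q (path m \<omega>) \<and> X m \<omega> = i} * bd_trans l r i j"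
proof -
  define E where "E = {s. Q s \<and> length s = Suc m \<and> s ! m = i}"
  define A where "A s = {\<omega>\<in>space M. path m \<omega> = s}" for s
  define B where "B s = A s \<inter> {\<omega>\<in>space M. X (Suc m) \<omega> = j}" for s
  have A_sets[measurable]: "A s \<in> sets M" for s
    unfolding A_def by (rule sets_path_eq)
  have B_sets: "B s \<in> sets M" for s
    unfolding B_def by measurable
  have B_A: "prob (B s) = prob (A s) * bd_trans l r i j" if "s \<in> E" for s
  proof -
    have "length s = Suc m" and s_m: "s ! m = i" using that by (auto simp: E_def)
    then have "A s = {\<omega>\<in>space M. \<forall>i'\<le>m. X i' \<omega> = s ! i'}"
      and "B s = {\<omega>\<in>space M. (\<forall>i'\<le>m. X i' \<omega> = s ! i') \<and> X (Suc m) \<omega> = j}"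
      unfolding A_def B_def by (auto simp: path_eq_iff)
    then show ?thesis
      using chain s_m unfolding is_bd_chain_def by auto
  qed
  have E_countable: "countable E" by (rule countable_subset[OF subset_UNIV]) simp
  have "emeasure M (\<Union>(B ` E)) = (\<integral>\<^sup>+s. emeasure M (B s) \<partial>count_space E)"
    by (rule emeasure_UN_countable[OF B_sets E_countable])
      (auto simp: disjoint_family_on_def A_def B_def)
  also have "\<dots> = (\<integral>\<^sup>+s. emeasure M (A s) * ennreal (bd_trans l r i j) \<partial>count_space E)"
    by (intro nn_integral_cong)
      (simp add: emeasure_eq_measure B_A ennreal_mult'' bd_trans_nonneg)
  also have "\<dots> = (\<integral>\<^sup>+s. emeasure M (A s) \<partial>count_space E) * ennreal (bd_trans l r i j)"
    by (rule nn_integral_multc) simp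
  also have "(\<integral>\<^sup>+s. emeasure M (A s) \<partial>count_space E) = emeasure M (\<Union>(A ` E))"
    by (rule emeasure_UN_countable[OF A_sets E_countable, symmetric])
      (auto simp: disjoint_family_on_def A_def)
  finally have "ennreal (prob (\<Union>(B ` E))) = ennreal (prob (\<Union>(A ` E)) * bd_trans l r i j)"
    by (simp add: emeasure_eq_measure ennreal_mult'' bd_trans_nonneg)
  then have "prob (\<Union>(B ` E)) = prob (\<Union>(A ` E)) * bd_trans l r i j"
    by (simp add: bd_trans_nonneg)
  moreover have "\<Union>(B ` E) = {\<omega>\<in>space M. Q (path m \<omega>) \<and> X m \<omega> = i \<and> X (Suc m) \<omega> = j}"
    "\<Union>(A ` E) = {\<omega>\<in>space M. Q (path m \<omega>) \<and> X m \<omega> = i}"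
    unfolding A_def B_def E_def by auto
  ultimately show ?thesis by simp
qed

lemma AE_bd_trans_nonzero: "AE \<omega> in M. \<forall>m. bd_trans l r (X m \<omega>) (X (Suc m) \<omega>) \<noteq> 0"
proof -
  have "AE \<omega> in M. bd_trans l r i j = 0 \<longrightarrow> \<not> (X m \<omega> = i \<and> X (Suc m) \<omega> = j)" for m i j
  proof (cases "bd_trans l r i j = 0")
    case True
    then have "prob {\<omega>\<in>space M. X m \<omega> = i \<and> X (Suc m) \<omega> = j} = 0"
      using measure_path_step[of "\<lambda>_. True" m i j] by simp
    then show ?thesis
      by (intro AE_I'[where N="{\<omega>\<in>space M. X m \<omega> = i \<and> X (Suc m) \<omega> = j}"])
        (auto simp: emeasure_eq_measure)
  qed simp
  then have "AE \<omega> in M. \<forall>m i j. bd_trans l r i j = 0 \<longrightarrow> \<not> (X m \<omega> = i \<and> X (Suc m) \<omega> = j)"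
    by (simp only: AE_all_countable) blast
  then show ?thesis by eventually_elim auto
qed

lemma AE_nearest_neighbour_step:
  "AE \<omega> in M. \<forall>m. X m \<omega> \<noteq> 0 \<longrightarrow> X (Suc m) \<omega> = X m \<omega> - 1 \<or> X (Suc m) \<omega> = Suc (X m \<omega>)"
  using AE_bd_trans_nonzero by eventually_elim (metis bd_trans_nonzero_imp_neighbour)

lemma AE_X_0: "AE \<omega> in M. X 0 \<omega> = k"
proof -
  have "prob {\<omega> \<in> space M. X 0 \<omega> = k} = 1" using chain unfolding is_bd_chain_def by auto
  from AE_prob_1[OF this] show ?thesis by eventually_elim auto
qed

definition alive :: "nat \<Rightarrow> 'a \<Rightarrow> bool" where
  "alive m \<omega> \<longleftrightarrow> (\<forall>i\<le>m. X i \<omega> \<noteq> 0)"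

definition occ :: "nat \<Rightarrow> nat \<Rightarrow> real" where
  "occ m j = prob {\<omega>\<in>space M. alive m \<omega> \<and> X m \<omega> = j}"

definition tail :: "nat \<Rightarrow> nat \<Rightarrow> real" where
  "tail m n = prob {\<omega>\<in>space M. alive m \<omega> \<and> n \<le> X m \<omega>}"

lemma alive_Suc: "alive (Suc m) \<omega> \<longleftrightarrow> alive m \<omega> \<and> X (Suc m) \<omega> \<noteq> 0"
  unfolding alive_def by (auto simp: le_Suc_eq)

lemma alive_iff_path: "alive m \<omega> \<longleftrightarrow> 0 \<notin> set (path m \<omega>)"
  by (auto simp: alive_def in_set_conv_nth less_Suc_eq_le)

lemma pred_alive[measurable]: "Measurable.pred M (alive m)"
  unfolding alive_def by measurable

lemma prob_alive_step:
  "prob {\<omega>\<in>space M. alive m \<omega> \<and> X m \<omega> = i \<and> X (Suc m) \<omega> = j} = occ m i * bd_trans l r i j"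
  using measure_path_step[of "\<lambda>s. 0 \<notin> set s" m i j] by (simp add: occ_def alive_iff_path)

lemma tail_eq_tail_Suc_plus_occ: "tail m n = tail m (Suc n) + occ m n"
proof -
  have "{\<omega>\<in>space M. alive m \<omega> \<and> n \<le> X m \<omega>}
      = {\<omega>\<in>space M. alive m \<omega> \<and> Suc n \<le> X m \<omega>} \<union> {\<omega>\<in>space M. alive m \<omega> \<and> X m \<omega> = n}"
    by auto
  then show ?thesis unfolding tail_def occ_def by (subst finite_measure_Union[symmetric]) auto
qed

lemma AE_alive_Suc_above_iff:
  assumes "n \<ge> 1"
  shows "AE \<omega> in M. (alive (Suc m) \<omega> \<and> n \<le> X (Suc m) \<omega>) \<longleftrightarrow>
    (alive m \<omega> \<and> Suc n \<le> X m \<omega>) \<or> (alive m \<omega> \<and> X m \<omega> = n \<and> X (Suc m) \<omega> = Suc n) \<or>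
    (n \<ge> 2 \<and> alive m \<omega> \<and> X m \<omega> = n - 1 \<and> X (Suc m) \<omega> = n)"
  using AE_nearest_neighbour_step
proof eventually_elim
  case (elim \<omega>)
  show ?case
  proof (cases "alive m \<omega>")
    case True
    then have "X m \<omega> \<noteq> 0" unfolding alive_def by blast
    moreover have "X (Suc m) \<omega> = X m \<omega> - 1 \<or> X (Suc m) \<omega> = Suc (X m \<omega>)"
      using elim \<open>X m \<omega> \<noteq> 0\<close> by blast
    ultimately have "(X (Suc m) \<omega> \<noteq> 0 \<and> n \<le> X (Suc m) \<omega>) \<longleftrightarrow> Suc n \<le> X m \<omega> \<or>
        (X m \<omega> = n \<and> X (Suc m) \<omega> = Suc n) \<or> (n \<ge> 2 \<and> X m \<omega> = n - 1 \<and> X (Suc m) \<omega> = n)"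
      using assms by arith
    with True show ?thesis unfolding alive_Suc by blast
  qed (simp add: alive_Suc)
qed

lemma tail_Suc:
  assumes n: "n \<ge> 1"
  shows "tail (Suc m) n = tail m n - l n * occ m n + (if n \<ge> 2 then r (n - 1) * occ m (n - 1) else 0)"
proof -
  define A1 where "A1 = {\<omega>\<in>space M. alive m \<omega> \<and> Suc n \<le> X m \<omega>}"
  define A2 where "A2 = {\<omega>\<in>space M. alive m \<omega> \<and> X m \<omega> = n \<and> X (Suc m) \<omega> = Suc n}"
  define A3 where "A3 = {\<omega>\<in>space M. n \<ge> 2 \<and> alive m \<omega> \<and> X m \<omega> = n - 1 \<and> X (Suc m) \<omega> = n}"
  have [measurable]: "A1 \<in> sets M" "A2 \<in> sets M" "A3 \<in> sets M"
    unfolding A1_def A2_def A3_def by measurable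
  have "tail (Suc m) n = prob (A1 \<union> A2 \<union> A3)"
    unfolding tail_def using AE_alive_Suc_above_iff[OF n, of m]
    by (intro measure_eq_AE) (auto simp: A1_def A2_def A3_def)
  also have "\<dots> = prob A1 + prob A2 + prob A3"
    by (subst finite_measure_Union; (subst finite_measure_Union)?) (auto simp: A1_def A2_def A3_def)
  also have "prob A1 = tail m n - occ m n"
    using tail_eq_tail_Suc_plus_occ[of m n] unfolding A1_def tail_def by simp
  also have "prob A2 = occ m n * r n"
    using prob_alive_step[of m n "Suc n"] n unfolding A2_def bd_trans_def by simp
  also have "prob A3 = (if n \<ge> 2 then r (n - 1) * occ m (n - 1) else 0)"
  proof (cases "n \<ge> 2")
    case True
    then have "A3 = {\<omega>\<in>space M. alive m \<omega> \<and> X m \<omega> = n - 1 \<and> X (Suc m) \<omega> = Suc (n - 1)}"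
      unfolding A3_def by auto
    then show ?thesis using prob_alive_step[of m "n - 1" "Suc (n - 1)"] True unfolding bd_trans_def by simp
  qed (simp add: A3_def)
  finally have "tail (Suc m) n = tail m n - occ m n + occ m n * r n
      + (if n \<ge> 2 then r (n - 1) * occ m (n - 1) else 0)" .
  moreover have l_eq: "l n = 1 - r n" using l_plus_r[OF n] by simp
  ultimately show ?thesis unfolding l_eq by (simp add: algebra_simps)
qed

lemma tail_telescope:
  assumes "n \<ge> 1"
  shows "tail N n = tail 0 n - l n * (\<Sum>m<N. occ m n)
    + (if n \<ge> 2 then r (n - 1) * (\<Sum>m<N. occ m (n - 1)) else 0)"
  by (induction N) (auto simp: tail_Suc[OF assms] algebra_simps)

lemma tail_0: "tail 0 n = (if n \<le> k then 1 else 0)"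
proof -
  have "tail 0 n = prob {\<omega>\<in>space M. n \<le> k}"
    unfolding tail_def alive_def using AE_X_0 start_pos by (intro measure_eq_AE) auto
  then show ?thesis by (simp add: prob_space)
qed

lemma tail_tendsto_0:
  assumes "AE \<omega> in M. hit0 X \<omega> < \<infinity>"
  shows "(\<lambda>N. tail N n) \<longlonglongrightarrow> 0"
proof -
  have "(\<lambda>N. prob {\<omega>\<in>space M. alive N \<omega>}) \<longlonglongrightarrow> prob (\<Inter>N. {\<omega>\<in>space M. alive N \<omega>})"
    by (rule finite_Lim_measure_decseq) (auto simp: decseq_def alive_def)
  also have "prob (\<Inter>N. {\<omega>\<in>space M. alive N \<omega>}) = prob {}"
  proof (rule measure_eq_AE)
    show "AE \<omega> in M. \<omega> \<in> (\<Inter>N. {\<omega>\<in>space M. alive N \<omega>}) \<longleftrightarrow> \<omega> \<in> {}"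
      using assms
    proof eventually_elim
      case (elim \<omega>)
      then obtain m where "X m \<omega> = 0" unfolding hit0_def by (auto split: if_splits)
      then show ?case unfolding alive_def by auto
    qed
  qed auto
  finally have alive_tendsto: "(\<lambda>N. prob {\<omega>\<in>space M. alive N \<omega>}) \<longlonglongrightarrow> 0" by simp
  have "tail N n \<le> prob {\<omega>\<in>space M. alive N \<omega>}" for N
    unfolding tail_def by (intro finite_measure_mono) auto
  then show ?thesis
    by (intro tendsto_sandwich[OF always_eventually always_eventually tendsto_const alive_tendsto])
      (simp_all add: tail_def)
qed

lemma bd_t_pos: "bd_t l r n > 0"
  unfolding bd_t_def using l_pos r_pos by (auto intro!: divide_pos_pos prod_pos)

lemma bd_x_mono: "m \<le> n \<Longrightarrow> bd_x l r m \<le> bd_x l r n"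
  unfolding bd_x_def using bd_t_pos by (intro sum_mono2) (auto intro: less_imp_le)

lemma min_bd_x_Suc:
  "min (bd_x l r (Suc n)) (bd_x l r k)
    = (if Suc n \<le> k then bd_t l r n else 0) + min (bd_x l r n) (bd_x l r k)"
proof (cases "Suc n \<le> k")
  case True
  then show ?thesis using bd_x_mono[OF True] bd_x_Suc[of l r n] bd_t_pos[of n] by auto
next
  case False
  then show ?thesis using bd_x_mono[of k n] bd_x_Suc[of l r n] bd_t_pos[of n] by auto
qed

definition mean_visits :: "nat \<Rightarrow> real" where
  "mean_visits n = min (bd_x l r n) (bd_x l r k) / (bd_t l r (n - 1) * l n)"

lemma r_mult_mean_visits:
  assumes "n \<ge> 1"
  shows "r n * mean_visits n = min (bd_x l r n) (bd_x l r k) / bd_t l r n"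
proof -
  obtain n' where n': "n = Suc n'" using assms by (cases n) auto
  show ?thesis
    using l_pos[OF assms] r_pos[OF assms] bd_t_pos[of n']
    unfolding mean_visits_def n' bd_t_Suc by (simp add: field_simps)
qed

text \<open>Since \<open>bd_x l r 0 = 0\<close>, the case \<open>n = 1\<close> is the same computation as \<open>n \<ge> 2\<close>.\<close>

lemma mean_visits_balance:
  assumes "n \<ge> 1"
  shows "l n * mean_visits n
    = (if n \<le> k then 1 else 0) + (if n \<ge> 2 then r (n - 1) * mean_visits (n - 1) else 0)"
proof -
  obtain n' where n': "n = Suc n'" using assms by (cases n) auto
  have "l n * mean_visits n = min (bd_x l r (Suc n')) (bd_x l r k) / bd_t l r n'"
    using l_pos[OF assms] unfolding mean_visits_def n' by simp
  also have "\<dots> = (if Suc n' \<le> k then 1 else 0) + min (bd_x l r n') (bd_x l r k) / bd_t l r n'"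
    using bd_t_pos[of n'] unfolding min_bd_x_Suc by (simp add: add_divide_distrib)
  also have "min (bd_x l r n') (bd_x l r k) / bd_t l r n'
      = (if n \<ge> 2 then r (n - 1) * mean_visits (n - 1) else 0)"
    using r_mult_mean_visits[of n'] bd_x_mono[of 0 k] unfolding n' by (cases "n' = 0") auto
  finally show ?thesis unfolding n' .
qed

lemma occ_sum_tendsto:
  assumes hit: "AE \<omega> in M. hit0 X \<omega> < \<infinity>" and "n \<ge> 1"
  shows "(\<lambda>N. \<Sum>m<N. occ m n) \<longlonglongrightarrow> mean_visits n"
  using \<open>n \<ge> 1\<close>
proof (induction n)
  case (Suc n)
  have flux: "l (Suc n) * (\<Sum>m<N. occ m (Suc n)) = tail 0 (Suc n) - tail N (Suc n)
      + (if Suc n \<ge> 2 then r n * (\<Sum>m<N. occ m n) else 0)" for N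
    using tail_telescope[of "Suc n" N] by simp
  have "(\<lambda>N. if Suc n \<ge> 2 then r n * (\<Sum>m<N. occ m n) else 0)
      \<longlonglongrightarrow> (if Suc n \<ge> 2 then r n * mean_visits n else 0)"
    using Suc.IH by (cases "n \<ge> 1") (auto intro: tendsto_intros)
  then have "(\<lambda>N. l (Suc n) * (\<Sum>m<N. occ m (Suc n)))
      \<longlonglongrightarrow> tail 0 (Suc n) - 0 + (if Suc n \<ge> 2 then r n * mean_visits n else 0)"
    unfolding flux by (intro tendsto_intros tail_tendsto_0[OF hit])
  also have "tail 0 (Suc n) - 0 + (if Suc n \<ge> 2 then r n * mean_visits n else 0)
      = l (Suc n) * mean_visits (Suc n)"
    using mean_visits_balance[of "Suc n"] by (simp add: tail_0)
  finally have "(\<lambda>N. l (Suc n) * (\<Sum>m<N. occ m (Suc n)) / l (Suc n))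
      \<longlonglongrightarrow> l (Suc n) * mean_visits (Suc n) / l (Suc n)"
    using l_pos[of "Suc n"] by (intro tendsto_divide tendsto_const) auto
  then show ?case using l_pos[of "Suc n"] by simp
qed simp

lemma nn_integral_visits_hit0:
  assumes hit: "AE \<omega> in M. hit0 X \<omega> < \<infinity>" and "n \<ge> 1"
  shows "(\<integral>\<^sup>+ \<omega>. visits X (hit0 X) n \<omega> \<partial>M) = ennreal (mean_visits n)"
proof -
  have alive_eq: "{\<omega>\<in>space M. enat m < hit0 X \<omega> \<and> X m \<omega> = n}
      = {\<omega>\<in>space M. alive m \<omega> \<and> X m \<omega> = n}" for m
    by (simp add: enat_less_hit0_iff alive_def)
  have "(\<integral>\<^sup>+ \<omega>. visits X (hit0 X) n \<omega> \<partial>M)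
      = (\<Sum>m. emeasure M {\<omega>\<in>space M. enat m < hit0 X \<omega> \<and> X m \<omega> = n})"
    by (rule nn_integral_visits) (unfold alive_eq, measurable)
  also have "\<dots> = (\<Sum>m. ennreal (occ m n))"
    unfolding alive_eq occ_def by (simp add: emeasure_eq_measure)
  also have "\<dots> = ennreal (mean_visits n)"
  proof (rule sums_unique[symmetric])
    have occ_sums: "(\<lambda>m. occ m n) sums mean_visits n"
      unfolding sums_def using occ_sum_tendsto[OF assms] .
    moreover have "0 \<le> mean_visits n"
      using sums_le[OF _ sums_zero occ_sums] by (simp add: occ_def)
    ultimately show "(\<lambda>m. ennreal (occ m n)) sums ennreal (mean_visits n)"
      by (simp add: occ_def)
  qed
  finally show ?thesis .
qed

end

theorem lemma3:
  fixes M :: "'a measure" and l r :: "nat \<Rightarrow> real" and k :: nat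
    and X :: "nat \<Rightarrow> 'a \<Rightarrow> nat" and T :: "nat \<Rightarrow> 'a \<Rightarrow> enat"
  assumes "prob_space M"
    and "\<And>n. n \<ge> 1 \<Longrightarrow> l n > 0"
    and "\<And>n. n \<ge> 1 \<Longrightarrow> r n > 0"
    and "\<And>n. n \<ge> 1 \<Longrightarrow> l n + r n = 1"
    and "k \<ge> 1"
    and "is_bd_chain M l r k X"
    and "AE \<omega> in M. hit0 X \<omega> < \<infinity>"
    and "\<And>m. nat_stopping_time M X (T m)"
    and "\<And>m \<omega>. T m \<omega> \<le> T (Suc m) \<omega>"
    and "\<And>m. (\<integral>\<^sup>+ \<omega>. ennreal_of_enat (T m \<omega>) \<partial>M) < \<infinity>"
    and "AE \<omega> in M. (\<lambda>m. T m \<omega>) \<longlonglongrightarrow> hit0 X \<omega>"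
    and "n \<ge> 1"
  shows "((\<integral>\<^sup>+ \<omega>. visits X (hit0 X) n \<omega> \<partial>M)
           = ennreal (min (bd_x l r n) (bd_x l r k) / (bd_t l r (n - 1) * l n))) \<and>
         ((\<lambda>m. \<integral>\<^sup>+ \<omega>. visits X (T m) n \<omega> \<partial>M)
           \<longlonglongrightarrow> ennreal (min (bd_x l r n) (bd_x l r k) / (bd_t l r (n - 1) * l n)))"
proof -
  interpret bd_chain M l r k X
    using assms(1-6) by (simp add: bd_chain_def bd_chain_axioms_def)
  have "(\<integral>\<^sup>+ \<omega>. visits X (hit0 X) n \<omega> \<partial>M) = ennreal (mean_visits n)"
    using nn_integral_visits_hit0 assms(7,12) .
  moreover have "(\<lambda>m. \<integral>\<^sup>+ \<omega>. visits X (T m) n \<omega> \<partial>M) \<longlonglongrightarrow> (\<integral>\<^sup>+ \<omega>. visits X (hit0 X) n \<omega> \<partial>M)"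
    using nn_integral_visits_stopping_tendsto[OF X_measurable assms(8,9,7,11)] .
  ultimately show ?thesis unfolding mean_visits_def by simp
qed

end
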